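(* Let $p\ge 2$ and let $J$ be a periodic Jacobi operator on $\ell^2(\mathbb{Z})$ with period $p$, given by $(J\psi)_n=a_{n-1}\psi_{n-1}+b_n\psi_n+a_n\psi_{n+1}$, where $a_n>0$, $b_n\in\mathbb{R}$, $a_{n+p}=a_n$, $b_{n+p}=b_n$ for all $n$. Let $A:=(a_1\cdots a_p)^{1/p}$, $s:=\lambda_p^{\max}-\lambda_1^{\min}$, and let $\sigma_1,\dots,\sigma_p$ be the spectral bands of $J$. Then $$\frac{4A^p}{s^{p-1}}\le\max_{1\le n\le p}|\sigma_n|.$$
   Context: Spectral structure: the spectrum of $J$ is $\sigma(J)=\{\lambda\in\mathbb{R}: |\Delta(\lambda)|\le 2\}$, where $\Delta(\lambda)=\operatorname{tr}\big(A_p(\lambda)A_{p-1}(\lambda)\cdots A_1(\lambda)\big)$ with $A_n(\lambda)=\begin{pmatrix}(\lambda-b_n)/a_n & -a_{n-1}/a_n\\ 1&0\end{pmatrix}$ (the discriminant, a real polynomial of degree $p$). It is a standard fact that this set is a union of $p$ closed intervals (bands) $\sigma_n=[\lambda_n^{\min},\lambda_n^{\max}]$, $1\le n\le p$, with $\lambda_n^{\min}<\lambda_n^{\max}\le\lambda_{n+1}^{\min}$ (bands may touch but do not overlap); on each band $\Delta$ is monotone and maps it onto $[-2,2]$. The spectral gaps are $\gamma_n=(\lambda_n^{\max},\lambda_{n+1}^{\min})$, $1\le n\le p-1$ (possibly empty). $|\cdot|$ denotes Lebesgue measure (length). *)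

theory Defs
  imports "HOL-Analysis.Analysis"
begin

definition transfer_mat :: "(int \<Rightarrow> real) \<Rightarrow> (int \<Rightarrow> real) \<Rightarrow> real \<Rightarrow> int \<Rightarrow> real^2^2" where
  "transfer_mat a b lam n =
     vector [vector [(lam - b n) / a n, - a (n - 1) / a n], vector [1, 0]]"

fun transfer_prod :: "(int \<Rightarrow> real) \<Rightarrow> (int \<Rightarrow> real) \<Rightarrow> real \<Rightarrow> nat \<Rightarrow> real^2^2" where
  "transfer_prod a b lam 0 = mat 1"
| "transfer_prod a b lam (Suc k) = transfer_mat a b lam (int (Suc k)) ** transfer_prod a b lam k"

definition discriminant :: "(int \<Rightarrow> real) \<Rightarrow> (int \<Rightarrow> real) \<Rightarrow> nat \<Rightarrow> real \<Rightarrow> real" where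
  "discriminant a b p lam = trace (transfer_prod a b lam p)"

definition jacobi_spectrum :: "(int \<Rightarrow> real) \<Rightarrow> (int \<Rightarrow> real) \<Rightarrow> nat \<Rightarrow> real set" where
  "jacobi_spectrum a b p = {lam. \<bar>discriminant a b p lam\<bar> \<le> 2}"

text \<open>lmin, lmax (indexed 1..p) are the band edges: sigma_n = [lmin n, lmax n], bands are ordered,
  may touch but do not overlap, their union is the spectrum, and on each band Delta is monotone
  and maps it onto [-2,2].\<close>
definition spectral_bands ::
  "(int \<Rightarrow> real) \<Rightarrow> (int \<Rightarrow> real) \<Rightarrow> nat \<Rightarrow> (nat \<Rightarrow> real) \<Rightarrow> (nat \<Rightarrow> real) \<Rightarrow> bool" where
  "spectral_bands a b p lmin lmax \<longleftrightarrow>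
     (\<forall>n\<in>{1..p}. lmin n < lmax n) \<and>
     (\<forall>n\<in>{1..<p}. lmax n \<le> lmin (Suc n)) \<and>
     jacobi_spectrum a b p = (\<Union>n\<in>{1..p}. {lmin n..lmax n}) \<and>
     (\<forall>n\<in>{1..p}. discriminant a b p ` {lmin n..lmax n} = {-2..2} \<and>
        (mono_on {lmin n..lmax n} (discriminant a b p) \<or>
         antimono_on {lmin n..lmax n} (discriminant a b p)))"

end

theory Submission
  imports Defs "HOL-Computational_Algebra.Polynomial"
begin

text \<open>The discriminant \<open>\<Delta>\<close> is a real polynomial of degree \<open>p\<close> with leading coefficient
  \<open>1 / (a\<^sub>1 \<cdots> a\<^sub>p) = A\<^sup>-\<^sup>p\<close>. For a level \<open>c \<in> (-2, 2)\<close>, monotonicity on the bands gives one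
  solution \<open>x\<^sub>j\<close> of \<open>\<Delta> = c\<close> in each band, and these are distinct because \<open>|\<Delta>| = 2\<close> at band edges;
  hence \<open>\<Delta> - c = A\<^sup>-\<^sup>p \<Prod>(\<lambda> - x\<^sub>j)\<close>. At a point of the first band where \<open>\<Delta> = -2\<close> the first
  factor is at most \<open>|\<sigma>\<^sub>1|\<close> and the others at most \<open>s\<close>, so \<open>2 + c \<le> A\<^sup>-\<^sup>p |\<sigma>\<^sub>1| s\<^sup>p\<^sup>-\<^sup>1\<close>;
  letting \<open>c \<rightarrow> 2\<close> gives the claim, already for the first band.\<close>

definition transfer_mat_poly :: "(int \<Rightarrow> real) \<Rightarrow> (int \<Rightarrow> real) \<Rightarrow> int \<Rightarrow> real poly^2^2" where
  "transfer_mat_poly a b n =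
     vector [vector [[:- b n / a n, 1 / a n:], [:- a (n - 1) / a n:]], vector [1, 0]]"

fun transfer_prod_poly :: "(int \<Rightarrow> real) \<Rightarrow> (int \<Rightarrow> real) \<Rightarrow> nat \<Rightarrow> real poly^2^2" where
  "transfer_prod_poly a b 0 = mat 1"
| "transfer_prod_poly a b (Suc k) = transfer_mat_poly a b (int (Suc k)) ** transfer_prod_poly a b k"

lemma transfer_prod_eq_poly:
  "transfer_prod a b lam k = (\<chi> i j. poly (transfer_prod_poly a b k $ i $ j) lam)"
proof (induction k)
  case 0
  show ?case by (simp add: mat_def vec_eq_iff)
next
  case (Suc k)
  then show ?case
    by (simp add: vec_eq_iff forall_2 matrix_matrix_mult_def transfer_mat_def transfer_mat_poly_def
        UNIV_2 algebra_simps add_divide_distrib diff_divide_distrib)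
qed

lemma transfer_prod_poly_Suc_entries:
  fixes a b :: "int \<Rightarrow> real" and k :: nat
  defines "M \<equiv> transfer_prod_poly a b k"
    and "t \<equiv> [:- b (int (Suc k)) / a (int (Suc k)), 1 / a (int (Suc k)):]"
    and "c \<equiv> [:- a (int k) / a (int (Suc k)):]"
  shows "transfer_prod_poly a b (Suc k) $ 1 $ 1 = t * M $ 1 $ 1 + c * M $ 2 $ 1"
    and "transfer_prod_poly a b (Suc k) $ 1 $ 2 = t * M $ 1 $ 2 + c * M $ 2 $ 2"
    and "transfer_prod_poly a b (Suc k) $ 2 $ 1 = M $ 1 $ 1"
    and "transfer_prod_poly a b (Suc k) $ 2 $ 2 = M $ 1 $ 2"
  by (simp_all add: M_def t_def c_def matrix_matrix_mult_def transfer_mat_poly_def UNIV_2)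

lemma degree_transfer_prod_poly:
  fixes a b :: "int \<Rightarrow> real" and k :: nat
  assumes "\<And>n. a n \<noteq> 0"
  defines "M \<equiv> transfer_prod_poly a b k"
  shows "degree (M $ 1 $ 1) = k \<and> lead_coeff (M $ 1 $ 1) = 1 / (\<Prod>i=1..k. a (int i)) \<and>
    degree (M $ 1 $ 2) \<le> k - 1 \<and> degree (M $ 2 $ 1) \<le> k - 1 \<and> degree (M $ 2 $ 2) \<le> k - 1"
  unfolding M_def
proof (induction k)
  case 0
  show ?case by (simp add: mat_def)
next
  case (Suc k)
  define M where "M = transfer_prod_poly a b k"
  define t where "t = [:- b (int (Suc k)) / a (int (Suc k)), 1 / a (int (Suc k)):]"
  define c where "c = [:- a (int k) / a (int (Suc k)):]"
  note entries = transfer_prod_poly_Suc_entries[of a b k, folded M_def t_def c_def]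
  have IH: "degree (M $ 1 $ 1) = k" "lead_coeff (M $ 1 $ 1) = 1 / (\<Prod>i=1..k. a (int i))"
    "degree (M $ 1 $ 2) \<le> k - 1" "degree (M $ 2 $ 1) \<le> k - 1" "degree (M $ 2 $ 2) \<le> k - 1"
    using Suc.IH unfolding M_def by blast+
  have t: "degree t = 1" "lead_coeff t = 1 / a (int (Suc k))"
    using assms(1) by (simp_all add: t_def)
  have "M $ 1 $ 1 \<noteq> 0"
    using IH(2) assms(1) by (auto simp: prod_zero_iff)
  then have tM: "degree (t * M $ 1 $ 1) = Suc k"
    using t IH(1) by (subst degree_mult_eq) auto
  have "degree (c * M $ 2 $ 1) \<le> k - 1"
    using IH(4) by (simp add: c_def)
  then have small: "degree (c * M $ 2 $ 1) < degree (t * M $ 1 $ 1)"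
    using tM by linarith
  have "degree (t * M $ 1 $ 2) \<le> k"
    \<comment> \<open>\<open>k - 1\<close> truncates at \<open>k = 0\<close>; there \<open>M $ 1 $ 2 = 0\<close> instead\<close>
  proof (cases k)
    case 0
    then show ?thesis by (simp add: M_def mat_def)
  next
    case (Suc j)
    then show ?thesis using degree_mult_le[of t "M $ 1 $ 2"] t IH(3) by simp
  qed
  then have "degree (t * M $ 1 $ 2 + c * M $ 2 $ 2) \<le> k"
    using IH(5) by (intro degree_add_le) (auto simp: c_def)
  moreover have "degree (t * M $ 1 $ 1 + c * M $ 2 $ 1) = Suc k"
    using degree_add_eq_left[OF small] tM by simp
  moreover have "coeff (t * M $ 1 $ 1 + c * M $ 2 $ 1) (Suc k) = 1 / (\<Prod>i=1..Suc k. a (int i))"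
  proof -
    have "coeff (t * M $ 1 $ 1) (Suc k) = lead_coeff t * lead_coeff (M $ 1 $ 1)"
      using lead_coeff_mult[of t "M $ 1 $ 1"] tM by simp
    then show ?thesis
      using t IH(2) small tM by (simp add: coeff_eq_0 prod.nat_ivl_Suc' mult.commute)
  qed
  ultimately show ?case
    unfolding entries using IH by auto
qed

lemma discriminant_eq_poly:
  fixes a b :: "int \<Rightarrow> real" and p :: nat
  assumes "\<And>n. a n \<noteq> 0" and "p \<ge> 1"
  defines "D \<equiv> trace (transfer_prod_poly a b p)"
  shows "discriminant a b p = poly D" and "degree D = p"
    and "lead_coeff D = 1 / (\<Prod>k=1..int p. a k)"
proof -
  define M where "M = transfer_prod_poly a b p"
  have D: "D = M $ 1 $ 1 + M $ 2 $ 2"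
    by (simp add: D_def M_def trace_def UNIV_2)
  show "discriminant a b p = poly D"
    by (simp add: fun_eq_iff D discriminant_def trace_def UNIV_2 M_def transfer_prod_eq_poly)
  have "(\<Prod>k=1..int p. a k) = (\<Prod>k\<in>int ` {1..p}. a k)"
    by (simp add: image_int_atLeastAtMost)
  also have "\<dots> = (\<Prod>i=1..p. a (int i))"
    by (simp add: prod.reindex)
  moreover have "degree (M $ 1 $ 1) = p" "lead_coeff (M $ 1 $ 1) = 1 / (\<Prod>i=1..p. a (int i))"
    and "degree (M $ 2 $ 2) \<le> p - 1"
    using degree_transfer_prod_poly[where a=a and b=b and k=p, OF assms(1)] unfolding M_def by blast+
  moreover have "degree (M $ 2 $ 2) < degree (M $ 1 $ 1)"
    using calculation assms(2) by linarith
  ultimately show "degree D = p" "lead_coeff D = 1 / (\<Prod>k=1..int p. a k)"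
    by (simp_all add: D degree_add_eq_left coeff_eq_0)
qed

lemma poly_eq_smult_prod_roots:
  fixes P :: "'a::idom poly"
  assumes "finite X" and "card X = degree P" and "\<And>x. x \<in> X \<Longrightarrow> poly P x = 0"
  shows "P = smult (lead_coeff P) (\<Prod>x\<in>X. [:- x, 1:])"
proof (rule ccontr)
  define R where "R = (\<Prod>x\<in>X. [:- x, 1:])"
  define Q where "Q = P - smult (lead_coeff P) R"
  assume "P \<noteq> smult (lead_coeff P) R"
  then have "Q \<noteq> 0"
    by (simp add: Q_def)
  have R: "lead_coeff R = 1" "degree R = degree P"
    unfolding R_def lead_coeff_prod using assms(1,2) by (simp_all add: degree_prod_sum_eq)
  have "degree Q \<le> degree P"
    using R by (simp add: Q_def degree_diff_le)
  moreover have "coeff Q (degree P) = 0"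
    using R by (simp add: Q_def)
  moreover have "degree Q \<noteq> degree P"
    using \<open>Q \<noteq> 0\<close> \<open>coeff Q (degree P) = 0\<close> leading_coeff_0_iff by metis
  ultimately have "degree Q < card X"
    using assms(2) by linarith
  moreover have "X \<subseteq> {x. poly Q x = 0}"
    using assms(1,3) by (auto simp: Q_def R_def poly_prod)
  then have "card X \<le> degree Q"
    using card_mono[OF poly_roots_finite[OF \<open>Q \<noteq> 0\<close>]] card_poly_roots_bound[OF \<open>Q \<noteq> 0\<close>]
    by (meson order_trans)
  ultimately show False
    by simp
qed

lemma monotone_on_atLeastAtMost_image_endpoint:
  fixes f :: "'a::linorder \<Rightarrow> 'b::linorder"
  assumes "f ` {x..y} = {m..M}" and "x \<le> y"
    and "mono_on {x..y} f \<or> antimono_on {x..y} f"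
  shows "f y = m \<or> f y = M"
proof -
  have y: "y \<in> {x..y}"
    using assms(2) by simp
  have "f y \<in> {m..M}"
    using assms(1) y by blast
  then have "m \<in> f ` {x..y}" "M \<in> f ` {x..y}"
    unfolding assms(1) by auto
  then obtain z w where z: "z \<in> {x..y}" "f z = m" and w: "w \<in> {x..y}" "f w = M"
    by blast
  from assms(3) show ?thesis
  proof
    assume "mono_on {x..y} f"
    then have "f w \<le> f y"
      using w y by (auto simp: monotone_on_def)
    then show ?thesis
      using w \<open>f y \<in> {m..M}\<close> by auto
  next
    assume "antimono_on {x..y} f"
    then have "f y \<le> f z"
      using z y by (auto simp: monotone_on_def)
    then show ?thesis
      using z \<open>f y \<in> {m..M}\<close> by auto
  qed
qed

locale monotone_bands =
  fixes f :: "real \<Rightarrow> real" and p :: nat and l u :: "nat \<Rightarrow> real"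
  assumes band_nonempty: "\<And>n. n \<in> {1..p} \<Longrightarrow> l n < u n"
    and bands_ordered: "\<And>n. n \<in> {1..<p} \<Longrightarrow> u n \<le> l (Suc n)"
    and band_image: "\<And>n. n \<in> {1..p} \<Longrightarrow> f ` {l n..u n} = {-2..2}"
    and band_monotone: "\<And>n. n \<in> {1..p} \<Longrightarrow> mono_on {l n..u n} f \<or> antimono_on {l n..u n} f"
begin

lemma band_upper_le_lower:
  assumes "1 \<le> j" and "j < k" and "k \<le> p"
  shows "u j \<le> l k"
  using assms
proof (induction k)
  case 0
  then show ?case by simp
next
  case (Suc k)
  show ?case
  proof (cases "j = k")
    case True
    then show ?thesis using Suc.prems bands_ordered by simp
  next
    case False
    then have "u j \<le> l k" "l k < u k"
      using Suc band_nonempty by simp_all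
    then show ?thesis
      using Suc.prems bands_ordered[of k] by simp
  qed
qed

lemma band_subset_span:
  assumes "n \<in> {1..p}"
  shows "{l n..u n} \<subseteq> {l 1..u p}"
proof -
  have "l 1 \<le> l n"
    using assms band_upper_le_lower[of 1 n] band_nonempty[of 1] by (cases "n = 1") auto
  moreover have "u n \<le> u p"
    using assms band_upper_le_lower[of n p] band_nonempty[of p] by (cases "n = p") auto
  ultimately show ?thesis
    by auto
qed

lemma band_upper_edge:
  assumes "n \<in> {1..p}"
  shows "\<bar>f (u n)\<bar> = 2"
  using monotone_on_atLeastAtMost_image_endpoint[OF band_image band_nonempty[THEN less_imp_le]
      band_monotone, OF assms assms assms]
  by auto

lemma level_points:
  assumes "-2 < c" and "c < 2"
  obtains x where "inj_on x {1..p}" and "\<And>n. n \<in> {1..p} \<Longrightarrow> x n \<in> {l n..u n} \<and> f (x n) = c"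
proof -
  have "\<forall>n\<in>{1..p}. \<exists>y\<in>{l n..u n}. f y = c"
  proof
    fix n assume "n \<in> {1..p}"
    then have "c \<in> f ` {l n..u n}"
      using band_image assms by simp
    then show "\<exists>y\<in>{l n..u n}. f y = c"
      by auto
  qed
  then obtain x where x: "\<And>n. n \<in> {1..p} \<Longrightarrow> x n \<in> {l n..u n} \<and> f (x n) = c"
    by metis
  have "x j < x k" if "j \<in> {1..p}" "k \<in> {1..p}" "j < k" for j k
  proof -
    have "x j \<le> u j" "u j \<le> l k" "l k \<le> x k"
      using x that band_upper_le_lower[of j k] by auto
    moreover have "x j \<noteq> u j"
      using x[OF that(1)] band_upper_edge[OF that(1)] assms by auto
    ultimately show ?thesis
      by simp
  qed
  then have "inj_on x {1..p}"
    by (intro inj_onI) (metis linorder_neqE_nat less_irrefl)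
  with x show ?thesis
    using that by blast
qed

lemma level_set_gap_le:
  assumes "f = poly P" and "degree P = p" and "p \<ge> 1" and "-2 < c" and "c < 2"
  shows "2 + c \<le> \<bar>lead_coeff P\<bar> * (u 1 - l 1) * (u p - l 1) ^ (p - 1)"
proof -
  obtain x where inj: "inj_on x {1..p}"
    and x: "\<And>n. n \<in> {1..p} \<Longrightarrow> x n \<in> {l n..u n} \<and> f (x n) = c"
    using level_points assms(4,5) by blast
  define Pc where "Pc = P + [:- c:]"
  have Pc: "degree Pc = p" "lead_coeff Pc = lead_coeff P" "\<And>y. poly Pc y = f y - c"
    using assms(1-3) by (auto simp: Pc_def degree_add_eq_left coeff_pCons split: nat.split)
  have Pc_factor: "Pc = smult (lead_coeff Pc) (\<Prod>z\<in>x ` {1..p}. [:- z, 1:])"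
    using inj x Pc by (intro poly_eq_smult_prod_roots) (auto simp: card_image)
  have factor: "f y - c = lead_coeff P * (\<Prod>n=1..p. y - x n)" for y
  proof -
    have "(\<Prod>z\<in>x ` {1..p}. y - z) = (\<Prod>n=1..p. y - x n)"
      using prod.reindex[OF inj, of "\<lambda>z. y - z"] by (simp add: comp_def)
    then show ?thesis
      using arg_cong[OF Pc_factor, of "\<lambda>q. poly q y"] Pc by (simp add: poly_prod)
  qed
  have "-2 \<in> f ` {l 1..u 1}"
    using band_image[of 1] assms(3) by simp
  then obtain y where y: "y \<in> {l 1..u 1}" "f y = -2"
    by (metis imageE)
  have "(\<Prod>n=1..p. \<bar>y - x n\<bar>) = \<bar>y - x 1\<bar> * (\<Prod>n=2..p. \<bar>y - x n\<bar>)"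
    using assms(3) by (simp add: prod.atLeast_Suc_atMost numeral_2_eq_2)
  also have "\<dots> \<le> (u 1 - l 1) * (u p - l 1) ^ (p - 1)"
  proof (rule mult_mono)
    show "\<bar>y - x 1\<bar> \<le> u 1 - l 1"
      using x[of 1] y assms(3) by auto
    have "\<bar>y - x n\<bar> \<le> u p - l 1" if "n \<in> {2..p}" for n
      using x[of n] y band_subset_span[of 1] band_subset_span[of n] that assms(3) by auto
    then show "(\<Prod>n=2..p. \<bar>y - x n\<bar>) \<le> (u p - l 1) ^ (p - 1)"
      using prod_mono[of "{2..p}" "\<lambda>n. \<bar>y - x n\<bar>" "\<lambda>_. u p - l 1"] by simp
    show "0 \<le> u 1 - l 1"
      using y by simp
  qed (simp add: prod_nonneg)
  finally have "\<bar>f y - c\<bar> \<le> \<bar>lead_coeff P\<bar> * ((u 1 - l 1) * (u p - l 1) ^ (p - 1))"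
    unfolding factor abs_mult abs_prod by (rule mult_left_mono) simp
  then show ?thesis
    using y assms(4,5) by (simp add: mult.assoc)
qed

lemma band_length_lower_bound:
  assumes "f = poly P" and "degree P = p" and "p \<ge> 1"
  shows "4 \<le> \<bar>lead_coeff P\<bar> * (u 1 - l 1) * (u p - l 1) ^ (p - 1)"
proof (rule dense_le)
  fix t :: real
  assume "t < 4"
  then have "2 + max (t - 2) 0 \<le> \<bar>lead_coeff P\<bar> * (u 1 - l 1) * (u p - l 1) ^ (p - 1)"
    using assms by (intro level_set_gap_le) auto
  then show "t \<le> \<bar>lead_coeff P\<bar> * (u 1 - l 1) * (u p - l 1) ^ (p - 1)"
    by linarith
qed

end

lemma spectral_bands_imp_monotone_bands:
  "spectral_bands a b p lmin lmax \<Longrightarrow> monotone_bands (discriminant a b p) p lmin lmax"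
  unfolding spectral_bands_def by unfold_locales auto

theorem corollary1p2:
  fixes a b :: "int \<Rightarrow> real" and p :: nat and lmin lmax :: "nat \<Rightarrow> real"
  assumes "p \<ge> 2"
    and "\<And>n. a n > 0"
    and "\<And>n. a (n + int p) = a n"
    and "\<And>n. b (n + int p) = b n"
    and "spectral_bands a b p lmin lmax"
  shows "4 * (root p (\<Prod>k=1..int p. a k)) ^ p / (lmax p - lmin 1) ^ (p - 1)
           \<le> Max ((\<lambda>n. lmax n - lmin n) ` {1..p})"
proof -
  interpret monotone_bands "discriminant a b p" p lmin lmax
    using assms(5) by (rule spectral_bands_imp_monotone_bands)
  define A where "A = (\<Prod>k=1..int p. a k)"
  define s where "s = lmax p - lmin 1"
  have "A > 0"
    using assms(2) by (simp add: A_def prod_pos)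
  have "a n \<noteq> 0" for n
    using assms(2)[of n] by simp
  note D = discriminant_eq_poly[where a=a and b=b and p=p, OF this]
  have "4 \<le> \<bar>1 / A\<bar> * (lmax 1 - lmin 1) * s ^ (p - 1)"
    using band_length_lower_bound[OF D(1,2)] D(3) assms(1) by (simp add: A_def s_def)
  moreover have "s > 0"
    using band_subset_span[of 1] band_nonempty[of 1] assms(1) by (auto simp: s_def)
  ultimately have "4 * A / s ^ (p - 1) \<le> lmax 1 - lmin 1"
    using \<open>A > 0\<close> by (simp add: field_simps)
  also have "\<dots> \<le> Max ((\<lambda>n. lmax n - lmin n) ` {1..p})"
    using assms(1) by (intro Max_ge) auto
  finally show ?thesis
    using \<open>A > 0\<close> assms(1) by (simp add: A_def s_def)
qed

end
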